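(* Let $n\geq 4$ and let $\gamma: WT_n\to\mathrm{GL}_{n+1}(\mathbb{C})$ be a homogeneous $3$-local representation of the welded twin group $WT_n$. Then $\gamma$ is reducible.
   Context: The virtual twin group $VT_n$ ($n\geq 2$) has generators $s_1,\dots,s_{n-1},\rho_1,\dots,\rho_{n-1}$ and defining relations: $s_i^2=1$ ($1\le i\le n-1$); $s_is_j=s_js_i$ ($|i-j|\ge2$); $\rho_i\rho_{i+1}\rho_i=\rho_{i+1}\rho_i\rho_{i+1}$ ($1\le i\le n-2$); $\rho_i\rho_j=\rho_j\rho_i$ ($|i-j|\ge2$); $\rho_i^2=1$; $s_i\rho_j=\rho_js_i$ ($|i-j|\ge2$); $\rho_i\rho_{i+1}s_i=s_{i+1}\rho_i\rho_{i+1}$ ($1\le i\le n-2$). The welded twin group $WT_n$ is the quotient of $VT_n$ by the additional relations $\rho_is_{i+1}s_i=s_{i+1}s_i\rho_{i+1}$ ($1\le i\le n-2$). A representation $\gamma:WT_n\to\mathrm{GL}_{n+1}(\mathbb{C})$ is homogeneous $3$-local if there are fixed $M,N\in\mathrm{GL}_3(\mathbb{C})$ with $\gamma(s_i)=\mathrm{diag}(I_{i-1},M,I_{n-i-1})$ and $\gamma(\rho_i)=\mathrm{diag}(I_{i-1},N,I_{n-i-1})$ for all $i$ (block-diagonal, $I_r$ the $r\times r$ identity). Reducible means there is a subspace $0\neq U\neq\mathbb{C}^{n+1}$ invariant under all $\gamma(g)$. *)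

theory Defs
  imports "Jordan_Normal_Form.Matrix" "Jordan_Normal_Form.Determinant"
begin

text \<open>Block-diagonal embedding diag(I_{i-1}, A, I_{n-i-1}) of a 3x3 matrix A
  into (n+1)x(n+1) matrices; i ranges over 1..n-1, rows/columns are 0-indexed,
  so the block occupies indices i-1, i, i+1.\<close>
definition local_mat :: "nat \<Rightarrow> nat \<Rightarrow> complex mat \<Rightarrow> complex mat" where
  "local_mat n i A = mat (n+1) (n+1) (\<lambda>(a,b).
     if i - 1 \<le> a \<and> a < i + 2 \<and> i - 1 \<le> b \<and> b < i + 2
     then A $$ (a + 1 - i, b + 1 - i)
     else if a = b then 1 else 0)"

definition WT_relations :: "nat \<Rightarrow> (nat \<Rightarrow> complex mat) \<Rightarrow> (nat \<Rightarrow> complex mat) \<Rightarrow> bool" where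
  "WT_relations n S R \<longleftrightarrow>
     (\<forall>i\<in>{1..n-1}. S i * S i = 1\<^sub>m (n+1)) \<and>
     (\<forall>i\<in>{1..n-1}. \<forall>j\<in>{1..n-1}. (i + 2 \<le> j \<or> j + 2 \<le> i) \<longrightarrow> S i * S j = S j * S i) \<and>
     (\<forall>i\<in>{1..n-2}. R i * R (i+1) * R i = R (i+1) * R i * R (i+1)) \<and>
     (\<forall>i\<in>{1..n-1}. \<forall>j\<in>{1..n-1}. (i + 2 \<le> j \<or> j + 2 \<le> i) \<longrightarrow> R i * R j = R j * R i) \<and>
     (\<forall>i\<in>{1..n-1}. R i * R i = 1\<^sub>m (n+1)) \<and>
     (\<forall>i\<in>{1..n-1}. \<forall>j\<in>{1..n-1}. (i + 2 \<le> j \<or> j + 2 \<le> i) \<longrightarrow> S i * R j = R j * S i) \<and>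
     (\<forall>i\<in>{1..n-2}. R i * R (i+1) * S i = S (i+1) * R i * R (i+1)) \<and>
     (\<forall>i\<in>{1..n-2}. R i * S (i+1) * S i = S (i+1) * S i * R (i+1))"

definition hom_3local_rep_WT :: "nat \<Rightarrow> complex mat \<Rightarrow> complex mat \<Rightarrow> bool" where
  "hom_3local_rep_WT n M N \<longleftrightarrow>
     M \<in> carrier_mat 3 3 \<and> N \<in> carrier_mat 3 3 \<and> det M \<noteq> 0 \<and> det N \<noteq> 0 \<and>
     WT_relations n (\<lambda>i. local_mat n i M) (\<lambda>i. local_mat n i N)"

text \<open>The image gamma(WT_n): the set of all products of generator images.
  (All generators are involutions, so this monoid is the image group.)\<close>
inductive_set rep_image :: "nat \<Rightarrow> complex mat \<Rightarrow> complex mat \<Rightarrow> complex mat set"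
  for n M N where
  one: "1\<^sub>m (n+1) \<in> rep_image n M N"
| gen_s: "g \<in> rep_image n M N \<Longrightarrow> 1 \<le> i \<Longrightarrow> i \<le> n - 1 \<Longrightarrow> local_mat n i M * g \<in> rep_image n M N"
| gen_r: "g \<in> rep_image n M N \<Longrightarrow> 1 \<le> i \<Longrightarrow> i \<le> n - 1 \<Longrightarrow> local_mat n i N * g \<in> rep_image n M N"

definition is_subspace :: "nat \<Rightarrow> complex vec set \<Rightarrow> bool" where
  "is_subspace d U \<longleftrightarrow> U \<subseteq> carrier_vec d \<and> 0\<^sub>v d \<in> U \<and>
     (\<forall>u\<in>U. \<forall>v\<in>U. u + v \<in> U) \<and> (\<forall>c. \<forall>u\<in>U. c \<cdot>\<^sub>v u \<in> U)"

definition reducible_rep :: "nat \<Rightarrow> complex mat set \<Rightarrow> bool" where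
  "reducible_rep d G \<longleftrightarrow> (\<exists>U. is_subspace d U \<and> U \<noteq> {0\<^sub>v d} \<and> U \<noteq> carrier_vec d \<and>
     (\<forall>g\<in>G. \<forall>u\<in>U. g *\<^sub>v u \<in> U))"

end

(*
  Only the far commutation relations between generators with indices 1 and 3 are needed.
  Their 3x3 blocks overlap in the single coordinate 2, and comparing the entries (4,0) and
  (3,1) of the two products yields Y_20 X_20 = 0 and Y_10 X_21 = 0 for all X, Y in {M, N}
  (coordinates counted from 0). Hence M_20 = N_20 = 0. If also M_10 = N_10 = 0, every
  generator maps e_0 to a multiple of itself; otherwise M_21 = N_21 = 0, so the last row of
  every generator is a multiple of e_n and the hyperplane v_n = 0 is invariant.
*)

theory Submission
  imports Defs
begin

lemma index_local_mat:
  "a < n + 1 \<Longrightarrow> b < n + 1 \<Longrightarrow> local_mat n i A $$ (a, b) =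
    (if i - 1 \<le> a \<and> a < i + 2 \<and> i - 1 \<le> b \<and> b < i + 2
     then A $$ (a + 1 - i, b + 1 - i) else if a = b then 1 else 0)"
  unfolding local_mat_def by simp

lemma local_mat_carrier: "local_mat n i A \<in> carrier_mat (n + 1) (n + 1)"
  unfolding local_mat_def by simp

lemma local_mat_first_col:
  assumes "1 \<le> i" "1 \<le> a" "a < n + 1"
  shows "local_mat n i A $$ (a, 0) = (if i = 1 \<and> a \<le> 2 then A $$ (a, 0) else 0)"
  using assms by (auto simp: index_local_mat)

lemma local_mat_last_row:
  assumes "1 \<le> i" "i \<le> n - 1" "b < n"
  shows "local_mat n i A $$ (n, b) =
    (if i = n - 1 \<and> n \<le> b + 2 then A $$ (2, b + 2 - n) else 0)"
  using assms by (auto simp: index_local_mat numeral_2_eq_2)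

lemma index_mult_mat_sparse_row:
  assumes "A \<in> carrier_mat d d'" "B \<in> carrier_mat d' d''" "a < d" "b < d''" "S \<subseteq> {..<d'}"
    and "\<And>k. k < d' \<Longrightarrow> k \<notin> S \<Longrightarrow> A $$ (a, k) = 0"
  shows "(A * B) $$ (a, b) = (\<Sum>k\<in>S. A $$ (a, k) * B $$ (k, b))"
proof -
  have "(A * B) $$ (a, b) = (\<Sum>k\<in>{..<d'}. A $$ (a, k) * B $$ (k, b))"
    using assms(1-4) by (simp add: scalar_prod_def atLeast0LessThan)
  also have "\<dots> = (\<Sum>k\<in>S. A $$ (a, k) * B $$ (k, b))"
    using assms(5,6) by (intro sum.mono_neutral_right) auto
  finally show ?thesis .
qed

lemma local_mats_1_3_commute_entries:
  assumes n: "n \<ge> 4"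
    and comm: "local_mat n 1 X * local_mat n 3 Y = local_mat n 3 Y * local_mat n 1 X"
  shows "Y $$ (2, 0) * X $$ (2, 0) = 0" "Y $$ (1, 0) * X $$ (2, 1) = 0"
proof -
  have prod: "(local_mat n i A * local_mat n j B) $$ (a, b) =
      (\<Sum>k<5. local_mat n i A $$ (a, k) * local_mat n j B $$ (k, b))"
    if "i \<in> {1, 3}" "a < 5" "b < 5" for i j a b A B
    using that n
    by (intro index_mult_mat_sparse_row[OF local_mat_carrier local_mat_carrier])
      (auto simp: index_local_mat)
  have "(local_mat n 1 X * local_mat n 3 Y) $$ (a, b) = (local_mat n 3 Y * local_mat n 1 X) $$ (a, b)"
    for a b using comm by simp
  \<comment> \<open>on the left these entries vanish, since rows 3 and 4 of the first factor are unit rows\<close>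
  from this[of 4 0] this[of 3 1] n show "Y $$ (2, 0) * X $$ (2, 0) = 0" "Y $$ (1, 0) * X $$ (2, 1) = 0"
    by (simp_all add: prod index_local_mat numeral_eq_Suc lessThan_Suc)
qed

definition coord_subspace :: "nat \<Rightarrow> nat set \<Rightarrow> complex vec set" where
  "coord_subspace d J = {v \<in> carrier_vec d. \<forall>j\<in>J. j < d \<longrightarrow> v $ j = 0}"

lemma is_subspace_coord_subspace: "is_subspace d (coord_subspace d J)"
  unfolding is_subspace_def coord_subspace_def by auto

lemma mult_mat_vec_coord_subspace:
  assumes G: "G \<in> carrier_mat d d" and u: "u \<in> coord_subspace d J"
    and zero: "\<And>a b. a \<in> J \<Longrightarrow> b \<notin> J \<Longrightarrow> a < d \<Longrightarrow> b < d \<Longrightarrow> G $$ (a, b) = 0"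
  shows "G *\<^sub>v u \<in> coord_subspace d J"
proof -
  have "(G *\<^sub>v u) $ a = 0" if "a \<in> J" "a < d" for a
  proof -
    have "(G *\<^sub>v u) $ a = (\<Sum>b<d. G $$ (a, b) * u $ b)"
      using G u that
      by (auto simp: coord_subspace_def mult_mat_vec_def scalar_prod_def atLeast0LessThan
          intro!: sum.cong)
    also have "\<dots> = 0"
      using u zero that by (intro sum.neutral) (auto simp: coord_subspace_def)
    finally show ?thesis .
  qed
  with G u show ?thesis
    by (auto simp: coord_subspace_def)
qed

lemma reducible_rep_coord_subspace:
  assumes "j \<in> J" "j < d" "k \<notin> J" "k < d"
    and "\<And>g u. g \<in> G \<Longrightarrow> u \<in> coord_subspace d J \<Longrightarrow> g *\<^sub>v u \<in> coord_subspace d J"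
  shows "reducible_rep d G"
  unfolding reducible_rep_def
proof (intro exI conjI)
  have "unit_vec d k \<in> coord_subspace d J" "unit_vec d k \<noteq> 0\<^sub>v d"
    using assms(3,4) by (auto simp: coord_subspace_def unit_vec_def vec_eq_iff)
  then show "coord_subspace d J \<noteq> {0\<^sub>v d}"
    by auto
  have "unit_vec d j \<notin> coord_subspace d J"
    using assms(1,2) by (auto simp: coord_subspace_def)
  then show "coord_subspace d J \<noteq> carrier_vec d"
    by auto
qed (use assms(5) is_subspace_coord_subspace in auto)

lemma rep_image_carrier: "g \<in> rep_image n M N \<Longrightarrow> g \<in> carrier_mat (n + 1) (n + 1)"
  by (induction rule: rep_image.induct) (metis one_carrier_mat mult_carrier_mat local_mat_carrier)+

lemma rep_image_preserves:
  assumes "g \<in> rep_image n M N" "U \<subseteq> carrier_vec (n + 1)"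
    and "\<And>A i u. A \<in> {M, N} \<Longrightarrow> 1 \<le> i \<Longrightarrow> i \<le> n - 1 \<Longrightarrow> u \<in> U \<Longrightarrow> local_mat n i A *\<^sub>v u \<in> U"
  shows "\<forall>u\<in>U. g *\<^sub>v u \<in> U"
  using assms(1)
proof (induction rule: rep_image.induct)
  case one
  then show ?case
    using assms(2) by auto
next
  case (gen_s g i)
  have "(local_mat n i M * g) *\<^sub>v u = local_mat n i M *\<^sub>v (g *\<^sub>v u)" if "u \<in> U" for u
    using that assms(2) rep_image_carrier[OF gen_s.hyps(1)]
    by (intro assoc_mult_mat_vec[OF local_mat_carrier]) auto
  then show ?case
    using gen_s assms(3) by auto
next
  case (gen_r g i)
  have "(local_mat n i N * g) *\<^sub>v u = local_mat n i N *\<^sub>v (g *\<^sub>v u)" if "u \<in> U" for u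
    using that assms(2) rep_image_carrier[OF gen_r.hyps(1)]
    by (intro assoc_mult_mat_vec[OF local_mat_carrier]) auto
  then show ?case
    using gen_r assms(3) by auto
qed

lemma reducible_rep_local_coord_subspace:
  assumes "j \<in> J" "j < n + 1" "k \<notin> J" "k < n + 1"
    and zero: "\<And>A i a b. A \<in> {M, N} \<Longrightarrow> 1 \<le> i \<Longrightarrow> i \<le> n - 1 \<Longrightarrow>
      a \<in> J \<Longrightarrow> b \<notin> J \<Longrightarrow> a < n + 1 \<Longrightarrow> b < n + 1 \<Longrightarrow> local_mat n i A $$ (a, b) = 0"
  shows "reducible_rep (n + 1) (rep_image n M N)"
proof (rule reducible_rep_coord_subspace[OF assms(1-4)])
  fix g u
  assume "g \<in> rep_image n M N" "u \<in> coord_subspace (n + 1) J"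
  moreover have "coord_subspace (n + 1) J \<subseteq> carrier_vec (n + 1)"
    by (auto simp: coord_subspace_def)
  moreover have "local_mat n i A *\<^sub>v v \<in> coord_subspace (n + 1) J"
    if "A \<in> {M, N}" "1 \<le> i" "i \<le> n - 1" "v \<in> coord_subspace (n + 1) J" for A i v
    using that zero by (intro mult_mat_vec_coord_subspace[OF local_mat_carrier]) auto
  ultimately show "g *\<^sub>v u \<in> coord_subspace (n + 1) J"
    using rep_image_preserves by blast
qed

lemma reducible_if_first_cols_vanish:
  assumes "n \<ge> 1" and "\<And>A. A \<in> {M, N} \<Longrightarrow> A $$ (1, 0) = 0 \<and> A $$ (2, 0) = 0"
  shows "reducible_rep (n + 1) (rep_image n M N)"
proof (rule reducible_rep_local_coord_subspace[of 1 "{1..}" n 0])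
  fix A :: "complex mat" and i a b :: nat
  assume "A \<in> {M, N}" "1 \<le> i" "a \<in> {1..}" "b \<notin> {1..}" "a < n + 1"
  moreover from this have "b = 0"
    by simp
  ultimately show "local_mat n i A $$ (a, b) = 0"
    using assms(2)[of A] local_mat_first_col[of i a n A]
    by (auto simp: le_Suc_eq numeral_2_eq_2)
qed (use assms(1) in auto)

lemma reducible_if_last_rows_vanish:
  assumes "n \<ge> 1" and "\<And>A. A \<in> {M, N} \<Longrightarrow> A $$ (2, 0) = 0 \<and> A $$ (2, 1) = 0"
  shows "reducible_rep (n + 1) (rep_image n M N)"
proof (rule reducible_rep_local_coord_subspace[of n "{n}" n 0])
  fix A :: "complex mat" and i a b :: nat
  assume "A \<in> {M, N}" "1 \<le> i" "i \<le> n - 1" "a \<in> {n}" "b \<notin> {n}" "b < n + 1"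
  then show "local_mat n i A $$ (a, b) = 0"
    using assms(2)[of A] local_mat_last_row[of i n b A]
    by (auto simp: le_Suc_eq)
qed (use assms(1) in auto)

lemma WT_relations_local_mats_1_3_commute:
  assumes "WT_relations n (\<lambda>i. local_mat n i M) (\<lambda>i. local_mat n i N)" "n \<ge> 4"
    and "X \<in> {M, N}" "Y \<in> {M, N}"
  shows "local_mat n 1 X * local_mat n 3 Y = local_mat n 3 Y * local_mat n 1 X"
proof -
  have indices: "(1::nat) \<in> {1..n - 1}" "(3::nat) \<in> {1..n - 1}" "(1::nat) + 2 \<le> 3"
    using assms(2) by auto
  have "local_mat n 1 M * local_mat n 3 M = local_mat n 3 M * local_mat n 1 M"
    "local_mat n 1 N * local_mat n 3 N = local_mat n 3 N * local_mat n 1 N"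
    "local_mat n 1 M * local_mat n 3 N = local_mat n 3 N * local_mat n 1 M"
    "local_mat n 3 M * local_mat n 1 N = local_mat n 1 N * local_mat n 3 M"
    using assms(1) indices unfolding WT_relations_def by blast+
  with assms(3,4) show ?thesis
    by auto
qed

theorem theorem4p4:
  fixes n :: nat and M N :: "complex mat"
  assumes "n \<ge> 4"
    and "hom_3local_rep_WT n M N"
  shows "reducible_rep (n+1) (rep_image n M N)"
proof -
  have "WT_relations n (\<lambda>i. local_mat n i M) (\<lambda>i. local_mat n i N)"
    using assms(2) unfolding hom_3local_rep_WT_def by blast
  note entries = local_mats_1_3_commute_entries[OF assms(1)
      WT_relations_local_mats_1_3_commute[OF this assms(1)]]
  have col0: "A $$ (2, 0) = 0" if "A \<in> {M, N}" for A
    using entries(1)[OF that that] by simp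
  show ?thesis
  proof (cases "M $$ (1, 0) = 0 \<and> N $$ (1, 0) = 0")
    case True
    then show ?thesis
      using assms(1) col0 by (intro reducible_if_first_cols_vanish) auto
  next
    case False
    then obtain B where B: "B \<in> {M, N}" "B $$ (1, 0) \<noteq> 0"
      by blast
    have "A $$ (2, 1) = 0" if "A \<in> {M, N}" for A
      using entries(2)[OF that B(1)] B(2) by simp
    then show ?thesis
      using assms(1) col0 by (intro reducible_if_last_rows_vanish) auto
  qed
qed

end
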